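(* Let $s,k$ be positive integers with $s>2\cdot10^6$, and let $n=\lceil 3e(s+1)k\rceil$. Let $\mathcal F_1,\ldots,\mathcal F_{s+1}\subset\binom{[n]}{k}$ be shifted and cross-dependent families. Suppose that $$|\mathcal F_i(s+1)|<s^{-4}\binom{n-s-1}{k-1}\quad\text{for all } i\in[s+1],$$ and that at least one of the families $\mathcal F_i$ does not coincide with $\mathcal A$. Then $\min_{i\in[s+1]}|\mathcal F_i|<\binom{n}{k}-\binom{n-s}{k}$.
   Context: $[n]=\{1,\ldots,n\}$; $\binom{X}{k}$ is the family of all $k$-subsets of $X$. $\mathcal A:=\{F\in\binom{[n]}{k}:F\cap[s]\ne\emptyset\}$. Families $\mathcal F_1,\ldots,\mathcal F_{s+1}$ are cross-dependent if there are no pairwise disjoint $F_1,\ldots,F_{s+1}$ with $F_i\in\mathcal F_i$ for all $i$. A family $\mathcal F\subset\binom{[n]}{k}$ is shifted if whenever $A\in\mathcal F$ and $B$ is obtained from $A$ by replacing some elements with smaller elements (not in the set), then $B\in\mathcal F$. For a family $\mathcal G$ and $j\in[s+1]$, $\mathcal G(j):=\{A\setminus\{j\}: A\in\mathcal G,\ A\cap[s+1]=\{j\}\}$. *)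

theory Defs
  imports Complex_Main
begin

definition ksubsets :: "'a set \<Rightarrow> nat \<Rightarrow> 'a set set" where
  "ksubsets X k = {F. F \<subseteq> X \<and> card F = k}"

definition famA :: "nat \<Rightarrow> nat \<Rightarrow> nat \<Rightarrow> nat set set" where
  "famA n k s = {F \<in> ksubsets {1..n} k. F \<inter> {1..s} \<noteq> {}}"

definition cross_dependent :: "nat \<Rightarrow> (nat \<Rightarrow> nat set set) \<Rightarrow> bool" where
  "cross_dependent s F \<longleftrightarrow>
     \<not> (\<exists>G. (\<forall>i\<in>{1..s+1}. G i \<in> F i) \<and>
            (\<forall>i\<in>{1..s+1}. \<forall>j\<in>{1..s+1}. i \<noteq> j \<longrightarrow> G i \<inter> G j = {}))"

definition shifted :: "nat \<Rightarrow> nat set set \<Rightarrow> bool" where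
  "shifted n \<F> \<longleftrightarrow>
     (\<forall>A\<in>\<F>. \<forall>X Y g. X \<subseteq> A \<and> Y \<subseteq> {1..n} \<and> Y \<inter> A = {} \<and>
        bij_betw g X Y \<and> (\<forall>x\<in>X. g x < x) \<longrightarrow> (A - X) \<union> Y \<in> \<F>)"

definition restr :: "nat \<Rightarrow> nat set set \<Rightarrow> nat \<Rightarrow> nat set set" where
  "restr s \<G> j = {A - {j} | A. A \<in> \<G> \<and> A \<inter> {1..s+1} = {j}}"

end

theory Submission
  imports Defs "HOL-Library.Infinite_Set"
begin

text \<open>Suppose every F i has at least as many members as A. A member of F i outside A lies in
  {s + 1..n}; replacing one of its elements by s + 1 gives a member of F i(s + 1), so
  |F i - A| <= K |F i(s + 1)| with K = (k + n - s - 1) / k, and then also |A - F i| <= K |F i(s + 1)|.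
  Let |F a(s + 1)| be maximal; it is nonempty because some F i differs from A.

  Counting shows that F a(s + 1) contains a set B for which there are pairwise disjoint
  (k - 1)-sets R 1, ..., R s in {s + 2..n}, avoiding B, each of them the shift of more than
  K |F a(s + 1)| sets G: R x collects the elements of {s + 2..} - B in the positions congruent to
  x - 1 modulo s, and B is chosen so that no initial segment holds too many of its elements.
  If insert x (R x) were missing from F i, shiftedness would put every insert x G into A - F i,
  which is too small. Hence insert x (R x) is in F i for all i and x, and together with
  insert (s + 1) B in F a these sets form a pairwise disjoint transversal, contradicting
  cross-dependence. The estimates only need s >= 40.\<close>

section \<open>Binomial estimates\<close>

lemma pow_div_fact_le_exp:
  fixes x :: real
  assumes "0 \<le> x"
  shows "x ^ q / fact q \<le> exp x"
proof -
  have exp_sums: "(\<lambda>n. x ^ n / fact n) sums exp x"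
    using exp_converges[of x] by (simp add: divide_inverse mult.commute)
  have "(\<Sum>n\<in>{q}. x ^ n / fact n) \<le> (\<Sum>n. x ^ n / fact n)"
    using assms exp_sums by (intro sum_le_suminf) (auto simp: sums_iff)
  then show ?thesis
    using sums_unique[OF exp_sums] by simp
qed

lemma binomial_mult_le_exp_pow: "real ((c * q) choose q) \<le> (exp 1 * real c) ^ q"
proof -
  have "real (((c * q) choose q) * fact q) \<le> real ((c * q) ^ q)"
    using binomial_fact_pow of_nat_le_iff by blast
  then have "real ((c * q) choose q) * fact q \<le> real c ^ q * real q ^ q"
    by (simp add: power_mult_distrib)
  also have "\<dots> \<le> real c ^ q * (exp (real q) * fact q)"
    using pow_div_fact_le_exp[of "real q" q] by (intro mult_left_mono) (auto simp: divide_le_eq)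
  finally have "real ((c * q) choose q) \<le> real c ^ q * exp (real q)"
    by (simp add: mult.assoc mult.commute[of _ "fact q"])
  then show ?thesis
    by (simp add: exp_of_nat_mult[symmetric] power_mult_distrib mult.commute)
qed

lemma binomial_diff_le_ratio_pow:
  assumes "q \<le> r" "r \<le> M"
  shows "real ((M - q) choose (r - q)) \<le> (real r / real M) ^ q * real (M choose r)"
  using assms
proof (induction q arbitrary: M r)
  case 0
  then show ?case by simp
next
  case (Suc q)
  have pos: "r > 0" "M > 0"
    using Suc.prems by auto
  have absorb: "real ((M - 1) choose (r - 1)) = (real r / real M) * real (M choose r)"
    using times_binomial_minus1_eq[of r M] pos
    by (simp add: field_simps) (metis of_nat_mult mult.commute)
  show ?case
  proof (cases "M = 1")
    case True
    then have "r = 1" "q = 0"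
      using Suc.prems by auto
    then show ?thesis
      using True by simp
  next
    case False
    have ratio_le: "real (r - 1) / real (M - 1) \<le> real r / real M"
      using Suc.prems False pos by (auto simp: field_simps of_nat_diff)
    have "real ((M - Suc q) choose (r - Suc q)) = real ((M - 1 - q) choose (r - 1 - q))"
      by simp
    also have "\<dots> \<le> (real (r - 1) / real (M - 1)) ^ q * real ((M - 1) choose (r - 1))"
      using Suc.IH[of "r - 1" "M - 1"] Suc.prems by auto
    also have "\<dots> \<le> (real r / real M) ^ q * real ((M - 1) choose (r - 1))"
      by (intro mult_right_mono power_mono ratio_le) auto
    also have "\<dots> = (real r / real M) ^ Suc q * real (M choose r)"
      by (simp only: absorb power_Suc mult_ac)
    finally show ?thesis .
  qed
qed

lemma binomial_add_ratio_pow_le: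
  assumes "r \<le> M" "0 < M"
  shows "(1 - real r / real M) ^ d * real ((M + d) choose r) \<le> real (M choose r)"
proof (induction d)
  case 0
  then show ?case by simp
next
  case (Suc d)
  have nonneg: "0 \<le> 1 - real r / real M"
    using assms by (auto simp: field_simps)
  have absorb: "real (M + Suc d - r) * real ((M + Suc d) choose r) = real (M + Suc d) * real ((M + d) choose r)"
    using binomial_absorb_comp[of "M + Suc d" r] by (metis of_nat_mult diff_Suc_1 add_Suc_right)
  have "1 - real r / real M \<le> 1 - real r / real (M + Suc d)"
    using assms by (auto simp: field_simps intro!: divide_left_mono)
  then have "(1 - real r / real M) * real ((M + Suc d) choose r)
      \<le> (1 - real r / real (M + Suc d)) * real ((M + Suc d) choose r)"
    by (intro mult_right_mono) auto
  also have "\<dots> = real ((M + d) choose r)"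
    using absorb assms by (simp add: field_simps of_nat_diff)
  finally have "(1 - real r / real M) ^ d * ((1 - real r / real M) * real ((M + Suc d) choose r))
      \<le> (1 - real r / real M) ^ d * real ((M + d) choose r)"
    using nonneg by (intro mult_left_mono) auto
  then have "(1 - real r / real M) ^ Suc d * real ((M + Suc d) choose r)
      \<le> (1 - real r / real M) ^ d * real ((M + d) choose r)"
    by (simp only: power_Suc mult_ac)
  then show ?case
    using Suc.IH by linarith
qed

lemma binomial_add_pow_le:
  assumes s: "1 \<le> s" and M: "6 * s * r \<le> M" "0 < M"
  shows "(1 - 1 / (6 * real s)) ^ d * real ((M + d) choose r) \<le> real (M choose r)"
proof -
  have "r \<le> 6 * s * r"
    using s by simp
  then have "r \<le> M"
    using M(1) by linarith
  have "real (6 * s * r) \<le> real M"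
    using M(1) by (simp only: of_nat_le_iff)
  then have "real r / real M \<le> 1 / (6 * real s)"
    using M(2) s by (simp add: field_simps)
  then have "(1 - 1 / (6 * real s)) ^ d \<le> (1 - real r / real M) ^ d"
    using s by (intro power_mono) (auto simp: field_simps)
  then have "(1 - 1 / (6 * real s)) ^ d * real ((M + d) choose r)
      \<le> (1 - real r / real M) ^ d * real ((M + d) choose r)"
    by (rule mult_right_mono) simp
  also have "\<dots> \<le> real (M choose r)"
    by (rule binomial_add_ratio_pow_le[OF \<open>r \<le> M\<close> M(2)])
  finally show ?thesis .
qed

lemma sum_power_Suc_le:
  fixes x :: real
  assumes "0 \<le> x" "x < 1"
  shows "(\<Sum>i<r. x ^ Suc i) \<le> x / (1 - x)"
proof -
  have "(\<Sum>i<r. x ^ Suc i) = x * ((1 - x ^ r) / (1 - x))"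
    using assms by (simp add: sum_distrib_left[symmetric] sum_gp_strict)
  also have "\<dots> \<le> x / (1 - x)"
    using assms by (simp add: divide_right_mono mult_left_le)
  finally show ?thesis .
qed

lemma binomial_mult_times_binomial_diff_le:
  fixes x :: real
  assumes "q \<le> r" "r \<le> M" "exp 1 * real c * real r \<le> x * real M"
  shows "real ((c * q) choose q) * real ((M - q) choose (r - q)) \<le> x ^ q * real (M choose r)"
proof (cases "M = 0")
  case True
  then show ?thesis
    using assms by simp
next
  case False
  have "real ((c * q) choose q) * real ((M - q) choose (r - q))
      \<le> (exp 1 * real c) ^ q * ((real r / real M) ^ q * real (M choose r))"
    using binomial_mult_le_exp_pow binomial_diff_le_ratio_pow[OF assms(1,2)] by (intro mult_mono) auto
  also have "\<dots> = (exp 1 * real c * real r / real M) ^ q * real (M choose r)"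
    by (simp add: power_mult_distrib power_divide)
  also have "\<dots> \<le> x ^ q * real (M choose r)"
    using assms False by (intro mult_right_mono power_mono) (auto simp: divide_le_eq)
  finally show ?thesis .
qed

lemma sum_binomial_products_le:
  assumes "exp 1 * real (s + 1) * real r \<le> (2/5) * real M" "r \<le> M"
  shows "(\<Sum>i<r. real (((s + 1) * Suc i) choose Suc i) * real ((M - Suc i) choose (r - Suc i)))
    \<le> (2/3) * real (M choose r)"
proof -
  have "(\<Sum>i<r. real (((s + 1) * Suc i) choose Suc i) * real ((M - Suc i) choose (r - Suc i)))
      \<le> (\<Sum>i<r. (2/5) ^ Suc i * real (M choose r))"
    using assms by (intro sum_mono binomial_mult_times_binomial_diff_le) auto
  also have "\<dots> = (\<Sum>i<r. (2/5::real) ^ Suc i) * real (M choose r)"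
    by (simp add: sum_distrib_right)
  also have "\<dots> \<le> ((2/5) / (1 - 2/5)) * real (M choose r)"
    by (intro mult_right_mono sum_power_Suc_le) auto
  finally show ?thesis by simp
qed

lemma sum_binomial_products_shifted_le:
  assumes "exp 1 * real (2 * s) * real r \<le> (2/3) * real M" "r \<le> M"
  shows "(\<Sum>b\<in>{1..r - t}. real ((2 * s * b) choose (t + b)) * real ((M - (t + b)) choose (r - (t + b))))
    \<le> 2 * (2/3) ^ t * real (M choose r)"
proof -
  have "(\<Sum>b\<in>{1..r - t}. real ((2 * s * b) choose (t + b)) * real ((M - (t + b)) choose (r - (t + b))))
      \<le> (\<Sum>b\<in>{1..r - t}. (2/3) ^ (t + b) * real (M choose r))"
  proof (rule sum_mono)
    fix b
    assume "b \<in> {1..r - t}"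
    then have "t + b \<le> r"
      by auto
    have "real ((2 * s * b) choose (t + b)) * real ((M - (t + b)) choose (r - (t + b)))
        \<le> real ((2 * s * (t + b)) choose (t + b)) * real ((M - (t + b)) choose (r - (t + b)))"
      by (intro mult_right_mono) (auto simp: binomial_right_mono)
    also have "\<dots> \<le> (2/3) ^ (t + b) * real (M choose r)"
      using \<open>t + b \<le> r\<close> assms by (intro binomial_mult_times_binomial_diff_le) auto
    finally show "real ((2 * s * b) choose (t + b)) * real ((M - (t + b)) choose (r - (t + b)))
        \<le> (2/3) ^ (t + b) * real (M choose r)" .
  qed
  also have "\<dots> = (2/3) ^ t * (\<Sum>i<r - t. (2/3::real) ^ Suc i) * real (M choose r)"
    by (simp add: sum.atLeast1_atMost_eq sum_distrib_left sum_distrib_right power_add mult_ac)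
  also have "\<dots> \<le> (2/3) ^ t * ((2/3) / (1 - 2/3)) * real (M choose r)"
    by (intro mult_right_mono mult_left_mono sum_power_Suc_le) auto
  finally show ?thesis
    by simp
qed

section \<open>Counting k-subsets\<close>

lemma finite_ksubsets [simp]: "finite X \<Longrightarrow> finite (ksubsets X k)"
  unfolding ksubsets_def by (rule finite_subset[of _ "Pow X"]) auto

lemma card_ksubsets: "finite X \<Longrightarrow> card (ksubsets X k) = card X choose k"
  unfolding ksubsets_def by (rule n_subsets)

lemma ksubsetsD:
  assumes "G \<in> ksubsets X k" "finite X"
  shows "G \<subseteq> X" "card G = k" "finite G"
  using assms finite_subset unfolding ksubsets_def by auto

lemma card_ksubsets_superset:
  assumes "finite Z" "S \<subseteq> Z" "card S = q" "q \<le> r"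
  shows "card {G \<in> ksubsets Z r. S \<subseteq> G} = (card Z - q) choose (r - q)"
proof -
  have finS: "finite S"
    using assms finite_subset by blast
  have image: "{G \<in> ksubsets Z r. S \<subseteq> G} = (\<lambda>T. T \<union> S) ` ksubsets (Z - S) (r - q)"
  proof (intro equalityI subsetI)
    fix G
    assume "G \<in> {G \<in> ksubsets Z r. S \<subseteq> G}"
    then have G: "G \<subseteq> Z" "card G = r" "S \<subseteq> G" "finite G"
      using assms(1) finite_subset by (auto simp: ksubsets_def)
    then have "G - S \<in> ksubsets (Z - S) (r - q)"
      using assms by (auto simp: ksubsets_def card_Diff_subset finS)
    moreover have "G = (G - S) \<union> S"
      using G by auto
    ultimately show "G \<in> (\<lambda>T. T \<union> S) ` ksubsets (Z - S) (r - q)"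
      by blast
  next
    fix G
    assume "G \<in> (\<lambda>T. T \<union> S) ` ksubsets (Z - S) (r - q)"
    then obtain T where T: "T \<subseteq> Z - S" "card T = r - q" "G = T \<union> S"
      by (auto simp: ksubsets_def)
    then have "finite T"
      using assms(1) finite_subset by blast
    then have "card G = r"
      using T finS assms by (subst T(3), subst card_Un_disjoint) auto
    then show "G \<in> {G \<in> ksubsets Z r. S \<subseteq> G}"
      using T assms by (auto simp: ksubsets_def)
  qed
  have "inj_on (\<lambda>T. T \<union> S) (ksubsets (Z - S) (r - q))"
    by (rule inj_onI) (auto simp: ksubsets_def)
  then show ?thesis
    using assms finS by (simp add: image card_image card_ksubsets card_Diff_subset)
qed

lemma card_ksubsets_meeting_ge:
  assumes "finite Z" "P \<subseteq> Z" "q \<le> r"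
  shows "card {G \<in> ksubsets Z r. q \<le> card (G \<inter> P)} \<le> (card P choose q) * ((card Z - q) choose (r - q))"
proof -
  have finP: "finite P"
    using assms finite_subset by blast
  have "{G \<in> ksubsets Z r. q \<le> card (G \<inter> P)} \<subseteq> (\<Union>S\<in>ksubsets P q. {G \<in> ksubsets Z r. S \<subseteq> G})"
  proof
    fix G
    assume G: "G \<in> {G \<in> ksubsets Z r. q \<le> card (G \<inter> P)}"
    then obtain S where "S \<subseteq> G \<inter> P" "card S = q"
      using finP obtain_subset_with_card_n by (metis (no_types, lifting) finite_Int mem_Collect_eq)
    then show "G \<in> (\<Union>S\<in>ksubsets P q. {G \<in> ksubsets Z r. S \<subseteq> G})"
      using G by (auto simp: ksubsets_def)
  qed
  then have "card {G \<in> ksubsets Z r. q \<le> card (G \<inter> P)}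
      \<le> card (\<Union>S\<in>ksubsets P q. {G \<in> ksubsets Z r. S \<subseteq> G})"
    by (intro card_mono) (auto simp: finP assms(1))
  also have "\<dots> \<le> (\<Sum>S\<in>ksubsets P q. card {G \<in> ksubsets Z r. S \<subseteq> G})"
    by (rule card_UN_le) (simp add: finP)
  also have "\<dots> = (\<Sum>S\<in>ksubsets P q. (card Z - q) choose (r - q))"
    using assms by (intro sum.cong refl card_ksubsets_superset) (auto simp: ksubsets_def)
  also have "\<dots> = (card P choose q) * ((card Z - q) choose (r - q))"
    by (simp add: card_ksubsets finP)
  finally show ?thesis .
qed

section \<open>Shifting\<close>

lemma shifted_exchange:
  assumes "shifted n F" "H \<in> F" "z \<in> H" "w \<notin> H" "w \<in> {1..n}" "w < z"
  shows "insert w (H - {z}) \<in> F"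
proof -
  have "(H - {z}) \<union> {w} \<in> F"
    using assms unfolding shifted_def
    by (elim ballE[of _ _ H] allE[of _ "{z}"] allE[of _ "{w}"] allE[of _ "\<lambda>_. w"]) (auto simp: bij_betw_def)
  then show ?thesis
    by simp
qed

text \<open>For sets of equal size, shifts_to G R is the shifting (Gale) order: listing both
  sets increasingly, each element of R is at most the corresponding element of G.\<close>
definition shifts_to :: "nat set \<Rightarrow> nat set \<Rightarrow> bool" where
  "shifts_to G R \<longleftrightarrow> (\<forall>c. card (G \<inter> {..c}) \<le> card (R \<inter> {..c}))"

lemma card_Int_atMost_less:
  fixes c :: nat
  assumes fin: "finite G" "finite R" and card_eq: "card G = card R"
    and above: "\<And>v. v \<in> R \<Longrightarrow> c < v \<Longrightarrow> v \<in> G" and z: "z \<in> G" "z \<notin> R" "c < z"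
  shows "card (G \<inter> {..c}) < card (R \<inter> {..c})"
proof -
  have "R - {..c} \<subseteq> (G - {..c}) - {z}"
    using above z by auto
  then have "card (R - {..c}) \<le> card ((G - {..c}) - {z})"
    using fin by (intro card_mono) auto
  also have "\<dots> < card (G - {..c})"
    using z fin by (intro card_Diff1_less) auto
  finally show ?thesis
    using card_Int_Diff[OF fin(1), of "{..c}"] card_Int_Diff[OF fin(2), of "{..c}"] card_eq by linarith
qed

lemma shifts_to_Max_less:
  assumes fin: "finite G" "finite R" and card_eq: "card G = card R" and shifts: "shifts_to G R"
    and ne: "G - R \<noteq> {}" "R - G \<noteq> {}"
  shows "Max (R - G) < Max (G - R)"
proof (rule ccontr)
  define z where "z = Max (G - R)"
  define w where "w = Max (R - G)"
  have w: "w \<in> R" "w \<notin> G" and z: "z \<in> G" "z \<notin> R"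
    using Max_in[of "R - G"] Max_in[of "G - R"] fin ne unfolding z_def w_def by auto
  assume "\<not> Max (R - G) < Max (G - R)"
  then have "z < w"
    using z w unfolding z_def w_def by (metis linorder_neqE_nat)
  have "v \<in> R" if "v \<in> G" "w - 1 < v" for v
  proof (rule ccontr)
    assume "v \<notin> R"
    then have "v \<le> z"
      using that fin unfolding z_def by (intro Max_ge) auto
    then show False
      using that \<open>z < w\<close> by auto
  qed
  then have "card (R \<inter> {..w - 1}) < card (G \<inter> {..w - 1})"
    using w \<open>z < w\<close> by (intro card_Int_atMost_less[OF fin(2,1) card_eq[symmetric]]) auto
  then show False
    using shifts unfolding shifts_to_def by (metis not_le)
qed

lemma shifts_to_exchange_Max:
  assumes fin: "finite G" "finite R" and card_eq: "card G = card R" and shifts: "shifts_to G R"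
    and ne: "G - R \<noteq> {}" "R - G \<noteq> {}"
  shows "shifts_to (insert (Max (R - G)) (G - {Max (G - R)})) R"
  unfolding shifts_to_def
proof
  fix c
  define z where "z = Max (G - R)"
  define w where "w = Max (R - G)"
  have "w < z"
    using shifts_to_Max_less[OF assms] unfolding z_def w_def .
  have w: "w \<in> R" "w \<notin> G" and z: "z \<in> G" "z \<notin> R"
    using Max_in[of "R - G"] Max_in[of "G - R"] fin ne unfolding z_def w_def by auto
  have le_c: "card (G \<inter> {..c}) \<le> card (R \<inter> {..c})"
    using shifts unfolding shifts_to_def by blast
  consider "c < w" | "z \<le> c" | "w \<le> c" "c < z"
    by linarith
  then show "card (insert w (G - {z}) \<inter> {..c}) \<le> card (R \<inter> {..c})"
    unfolding z_def[symmetric] w_def[symmetric]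
  proof cases
    case 1
    then have "insert w (G - {z}) \<inter> {..c} = G \<inter> {..c}"
      using \<open>w < z\<close> by auto
    then show ?thesis
      using le_c by simp
  next
    case 2
    then have "insert w (G - {z}) \<inter> {..c} = insert w ((G \<inter> {..c}) - {z})"
      using \<open>w < z\<close> by auto
    moreover have "card (insert w ((G \<inter> {..c}) - {z})) = Suc (card ((G \<inter> {..c}) - {z}))"
      using w fin by simp
    moreover have "\<dots> = card (G \<inter> {..c})"
      using z 2 fin by (intro card_Suc_Diff1) auto
    ultimately show ?thesis
      using le_c by simp
  next
    case 3
    have "v \<in> G" if "v \<in> R" "c < v" for v
    proof (rule ccontr)
      assume "v \<notin> G"
      then have "v \<le> w"
        using that fin unfolding w_def by (intro Max_ge) auto
      then show False
        using that 3 by auto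
    qed
    then have "card (G \<inter> {..c}) < card (R \<inter> {..c})"
      using z 3 by (intro card_Int_atMost_less[OF fin card_eq]) auto
    moreover have "insert w (G - {z}) \<inter> {..c} = insert w (G \<inter> {..c})"
      using 3 by auto
    ultimately show ?thesis
      using w fin by simp
  qed
qed

lemma shifted_insert_shifts_to:
  assumes "shifted n F" "R \<subseteq> {1..n}" "x \<notin> R"
  shows "finite G \<Longrightarrow> finite R \<Longrightarrow> card G = card R \<Longrightarrow> x \<notin> G \<Longrightarrow> shifts_to G R
    \<Longrightarrow> insert x G \<in> F \<Longrightarrow> insert x R \<in> F"
proof (induction "card (G - R)" arbitrary: G rule: less_induct)
  case less
  show ?case
  proof (cases "G - R = {} \<or> R - G = {}")
    case True
    then have "G = R"
      using less.prems by (metis Diff_eq_empty_iff card_subset_eq)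
    then show ?thesis
      using less.prems by simp
  next
    case False
    define z where "z = Max (G - R)"
    define w where "w = Max (R - G)"
    define G' where "G' = insert w (G - {z})"
    have "w < z"
      using shifts_to_Max_less less.prems False unfolding z_def w_def by blast
    have w: "w \<in> R" "w \<notin> G" and z: "z \<in> G" "z \<notin> R"
      using Max_in[of "R - G"] Max_in[of "G - R"] less.prems False unfolding z_def w_def by auto
    have "shifts_to G' R"
      using shifts_to_exchange_Max less.prems False unfolding G'_def z_def w_def by blast
    moreover have "card G' = card R"
    proof -
      have "card G' = Suc (card (G - {z}))"
        using w less.prems by (simp add: G'_def)
      also have "\<dots> = card G"
        using z less.prems by (intro card_Suc_Diff1) auto
      finally show ?thesis
        using less.prems by simp
    qed
    moreover have "x \<notin> G'"
      using less.prems w assms(3) by (auto simp: G'_def)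
    moreover have "insert x G' \<in> F"
    proof -
      have "w \<in> {1..n}" "w \<noteq> x"
        using w assms(2,3) by auto
      then have "insert w (insert x G - {z}) \<in> F"
        using shifted_exchange[OF assms(1) less.prems(6), of z w] z w \<open>w < z\<close> by auto
      moreover have "insert w (insert x G - {z}) = insert x G'"
        using z less.prems by (auto simp: G'_def)
      ultimately show ?thesis
        by simp
    qed
    moreover have "card (G' - R) < card (G - R)"
    proof -
      have "G' - R = (G - R) - {z}"
        using w by (auto simp: G'_def)
      then show ?thesis
        using z less.prems by (metis DiffI card_Diff1_less finite_Diff)
    qed
    ultimately show ?thesis
      using less.hyps[of G'] less.prems by (auto simp: G'_def)
  qed
qed

section \<open>Stripes and crowded sets\<close>

lemma infinite_atLeast_Diff_finite: "finite B \<Longrightarrow> infinite ({lo::nat..} - B)"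
  by (metis Diff_infinite_finite infinite_Ici)

lemma Suc_enumerate_atLeast_Diff:
  fixes lo :: nat
  assumes "finite B"
  shows "Suc (enumerate ({lo..} - B) p) = lo + Suc p + card (B \<inter> {lo..enumerate ({lo..} - B) p})"
proof -
  define W where "W = {lo..} - B"
  define u where "u = enumerate W"
  have inf: "infinite W"
    unfolding W_def using infinite_atLeast_Diff_finite[OF assms] .
  have uW: "u q \<in> W" for q
    unfolding u_def using enumerate_in_set[OF inf] .
  have mono: "a < b \<Longrightarrow> u a < u b" for a b
    unfolding u_def using enumerate_mono[OF _ inf] by blast
  have "W \<inter> {..u p} = u ` {..p}"
  proof (intro equalityI subsetI)
    fix z
    assume z: "z \<in> W \<inter> {..u p}"
    then obtain q where q: "u q = z"
      unfolding u_def using enumerate_Ex[OF inf] by blast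
    then have "q \<le> p"
      using z mono by (metis IntD2 atMost_iff leD leI)
    then show "z \<in> u ` {..p}"
      using q by auto
  next
    fix z
    assume "z \<in> u ` {..p}"
    then obtain q where "q \<le> p" "z = u q"
      by auto
    then show "z \<in> W \<inter> {..u p}"
      using uW mono by (metis IntI atMost_iff le_eq_less_or_eq)
  qed
  moreover have "inj u"
    unfolding u_def using inj_enumerate[OF inf] by simp
  ultimately have card_W: "card (W \<inter> {..u p}) = Suc p"
    by (simp add: card_image inj_on_subset)
  have "{lo..u p} = (W \<inter> {..u p}) \<union> (B \<inter> {lo..u p})" "(W \<inter> {..u p}) \<inter> (B \<inter> {lo..u p}) = {}"
    using uW[of p] unfolding W_def by auto
  then have "card {lo..u p} = card (W \<inter> {..u p}) + card (B \<inter> {lo..u p})"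
    by (metis card_Un_disjoint finite_Int finite_atLeastAtMost finite_atMost)
  moreover have "lo \<le> u p"
    using uW[of p] unfolding W_def by auto
  ultimately show ?thesis
    using card_W unfolding u_def W_def by simp
qed

lemma uncrowded_position_bound:
  fixes s t p b q :: nat
  assumes "1 \<le> s" "2 * s * b < 2 * s * t + p + 1 + b" "p + 1 \<le> s * q"
  shows "p + b \<le> 2 * t + (s + 1) * q"
proof (rule ccontr)
  assume "\<not> ?thesis"
  then have "2 * t + q + 2 \<le> b"
    using assms(3) by (simp add: algebra_simps)
  then obtain d where b: "b = 2 * t + q + 2 + d"
    using le_Suc_ex by blast
  have "2 * s * b = 4 * (s * t) + 2 * (s * q) + 4 * s + 2 * (s * d)" "2 * s * t = 2 * (s * t)"
    unfolding b by (simp_all add: algebra_simps)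
  moreover have "t \<le> s * t" "q \<le> s * q" "d \<le> s * d"
    using assms(1) by simp_all
  ultimately show False
    using assms b by linarith
qed

lemma add_mult_eq_add_mult_iff:
  fixes j j' s i i' :: nat
  assumes "j < s" "j' < s"
  shows "j + s * i = j' + s * i' \<longleftrightarrow> j = j' \<and> i = i'"
proof
  assume eq: "j + s * i = j' + s * i'"
  then have "j = j'"
    using assms by (metis mod_mult_self2 mod_less)
  then show "j = j' \<and> i = i'"
    using eq assms by simp
qed simp

definition stripe :: "nat \<Rightarrow> nat set \<Rightarrow> nat \<Rightarrow> nat \<Rightarrow> nat \<Rightarrow> nat set" where
  "stripe lo B s r j = (\<lambda>i. enumerate ({lo..} - B) (j + s * i)) ` {..<r}"

context
  fixes lo :: nat and B :: "nat set" and s r :: nat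
  assumes finB: "finite B"
begin

abbreviation outside :: "nat \<Rightarrow> nat" where
  "outside \<equiv> enumerate ({lo..} - B)"

lemma outside_strict_mono: "strict_mono outside"
  using enumerate_mono[OF _ infinite_atLeast_Diff_finite[OF finB]] by (auto intro: strict_monoI)

lemma outside_mem: "outside p \<in> {lo..} - B"
  using enumerate_in_set[OF infinite_atLeast_Diff_finite[OF finB]] by blast

lemma outside_le: "outside p \<le> lo + p + card B"
proof -
  have "card (B \<inter> {lo..outside p}) \<le> card B"
    using finB by (intro card_mono) auto
  then show ?thesis
    using Suc_enumerate_atLeast_Diff[OF finB, of lo p] by linarith
qed

lemma card_stripe: "j < s \<Longrightarrow> card (stripe lo B s r j) = r"
  unfolding stripe_def using outside_strict_mono add_mult_eq_add_mult_iff
  by (subst card_image) (auto intro!: inj_onI dest: strict_mono_eq[THEN iffD1])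

lemma stripe_Int_base: "stripe lo B s r j \<inter> B = {}"
  unfolding stripe_def using outside_mem by auto

lemma stripe_disjoint:
  "j < s \<Longrightarrow> j' < s \<Longrightarrow> j \<noteq> j' \<Longrightarrow> stripe lo B s r j \<inter> stripe lo B s r j' = {}"
  unfolding stripe_def using outside_strict_mono add_mult_eq_add_mult_iff
  by (auto dest: strict_mono_eq[THEN iffD1])

lemma stripe_subset:
  assumes "j < s" "card B = r" "lo + s * r + r \<le> Suc n"
  shows "stripe lo B s r j \<subseteq> {lo..n}"
proof
  fix x
  assume "x \<in> stripe lo B s r j"
  then obtain i where i: "i < r" "x = outside (j + s * i)"
    unfolding stripe_def by auto
  have "s * i + s \<le> s * r"
    using i by (metis Suc_leI mult_Suc_right mult_le_mono2 add.commute)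
  then show "x \<in> {lo..n}"
    using outside_le[of "j + s * i"] outside_mem[of "j + s * i"] i assms by auto
qed

lemma not_shifts_to_stripe:
  assumes j: "j < s" and G: "G \<subseteq> {y..}" "finite G" "card G = r"
    and not_shifts: "\<not> shifts_to G (stripe lo B s r j)"
  shows "\<exists>i<r. Suc i \<le> card (G \<inter> {y..<outside (j + s * i)})"
proof -
  define R where "R = stripe lo B s r j"
  obtain c where c: "card (R \<inter> {..c}) < card (G \<inter> {..c})"
    using not_shifts unfolding shifts_to_def R_def by (auto simp: not_le)
  define i where "i = card (R \<inter> {..c})"
  have "card (G \<inter> {..c}) \<le> r"
    using G by (metis card_mono inf_le1)
  then have "i < r"
    using c i_def by linarith
  have "c < outside (j + s * i)"
  proof (rule ccontr)
    assume "\<not> c < outside (j + s * i)"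
    have "outside (j + s * i') \<le> c" if "i' \<le> i" for i'
    proof -
      have "outside (j + s * i') \<le> outside (j + s * i)"
        using that by (intro strict_mono_less_eq[OF outside_strict_mono, THEN iffD2]) simp
      then show ?thesis
        using \<open>\<not> c < outside (j + s * i)\<close> by linarith
    qed
    then have "(\<lambda>i'. outside (j + s * i')) ` {..i} \<subseteq> R \<inter> {..c}"
      using \<open>i < r\<close> by (auto simp: R_def stripe_def)
    then have "card ((\<lambda>i'. outside (j + s * i')) ` {..i}) \<le> i"
      unfolding i_def by (intro card_mono) (auto simp: R_def stripe_def)
    moreover have "inj_on (\<lambda>i'. outside (j + s * i')) {..i}"
    proof (rule inj_onI)
      fix a b
      assume "outside (j + s * a) = outside (j + s * b)"
      then have "j + s * a = j + s * b"
        using strict_mono_eq[OF outside_strict_mono] by blast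
      then show "a = b"
        using j by simp
    qed
    ultimately show False
      by (simp add: card_image)
  qed
  then have "G \<inter> {..c} \<subseteq> G \<inter> {y..<outside (j + s * i)}"
    using G by auto
  then have "card (G \<inter> {..c}) \<le> card (G \<inter> {y..<outside (j + s * i)})"
    using G by (intro card_mono) auto
  then show ?thesis
    using \<open>i < r\<close> c i_def by (intro exI[of _ i]) auto
qed

end

definition crowded :: "nat \<Rightarrow> nat \<Rightarrow> nat \<Rightarrow> nat \<Rightarrow> nat \<Rightarrow> nat set set" where
  "crowded lo n s r t = {B \<in> ksubsets {lo..n} r.
     \<exists>x\<in>{lo..n}. 2 * s * t + (x + 1 - lo) \<le> 2 * s * card (B \<inter> {lo..x})}"

lemma crowded_empty:
  assumes "1 \<le> s"
  shows "crowded lo n s r (r + 1) = {}"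
proof -
  have "2 * s * card (B \<inter> {lo..x}) < 2 * s * (r + 1) + (x + 1 - lo)"
    if "B \<in> ksubsets {lo..n} r" for B x
  proof -
    have "card (B \<inter> {lo..x}) \<le> r"
      using ksubsetsD[OF that finite_atLeastAtMost] by (metis card_mono inf_le1)
    then have "2 * s * card (B \<inter> {lo..x}) \<le> 2 * s * r"
      by simp
    also have "\<dots> < 2 * s * (r + 1)"
      using assms by simp
    finally show ?thesis
      by linarith
  qed
  then show ?thesis
    unfolding crowded_def by (blast dest: leD)
qed

lemma uncrowded_enumerate_le:
  fixes lo n s r t :: nat
  assumes B: "B \<in> ksubsets {lo..n} r" "B \<notin> crowded lo n s r t" and s: "1 \<le> s" and j: "j < s"
    and u_in: "enumerate ({lo..} - B) (j + s * i) \<in> {lo..n}"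
  shows "enumerate ({lo..} - B) (j + s * i) \<le> lo + 2 * t + (s + 1) * Suc i"
proof -
  define p where "p = j + s * i"
  define u where "u = enumerate ({lo..} - B) p"
  define b where "b = card (B \<inter> {lo..u})"
  have "finite B"
    using ksubsetsD[OF B(1)] by simp
  then have u: "u + 1 = lo + Suc p + b"
    using Suc_enumerate_atLeast_Diff[of B lo p] unfolding u_def b_def by simp
  have "2 * s * b < 2 * s * t + (u + 1 - lo)"
    using B u_in unfolding crowded_def u_def p_def b_def by (auto simp: not_le)
  then have "2 * s * b < 2 * s * t + p + 1 + b"
    using u by simp
  moreover have "p + 1 \<le> s * Suc i"
    unfolding p_def using j by simp
  ultimately have "p + b \<le> 2 * t + (s + 1) * Suc i"
    by (rule uncrowded_position_bound[OF s])
  then show ?thesis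
    using u unfolding u_def p_def by simp
qed

lemma card_shifts_to_stripe_ge:
  fixes lo n s r j t :: nat
  assumes B: "B \<in> ksubsets {lo..n} r" "B \<notin> crowded lo n s r t"
    and s: "1 \<le> s" and room: "lo + s * r + r \<le> Suc n" and j: "j < s"
  shows "real (card {G \<in> ksubsets {lo + 2 * t..n} r. shifts_to G (stripe lo B s r j)})
    \<ge> real (card {lo + 2 * t..n} choose r)
      - (\<Sum>i<r. real (((s + 1) * Suc i) choose Suc i)
               * real ((card {lo + 2 * t..n} - Suc i) choose (r - Suc i)))"
proof -
  define Z where "Z = {lo + 2 * t..n}"
  define U where "U = {G \<in> ksubsets Z r. shifts_to G (stripe lo B s r j)}"
  define P where "P i = {lo + 2 * t..<enumerate ({lo..} - B) (j + s * i)}" for i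
  have finB: "finite B" "card B = r"
    using ksubsetsD[OF B(1)] by auto
  have outside_in: "enumerate ({lo..} - B) (j + s * i) \<in> {lo..n}" if "i < r" for i
    using stripe_subset[OF finB(1) j finB(2) room] that unfolding stripe_def by auto
  have P_sub: "P i \<subseteq> Z" if "i < r" for i
    using outside_in[OF that] unfolding P_def Z_def by auto
  have card_P: "card (P i) \<le> (s + 1) * Suc i" if "i < r" for i
    using uncrowded_enumerate_le[OF B s j outside_in[OF that]] unfolding P_def by simp
  have "ksubsets Z r - U \<subseteq> (\<Union>i<r. {G \<in> ksubsets Z r. Suc i \<le> card (G \<inter> P i)})"
  proof
    fix G
    assume G: "G \<in> ksubsets Z r - U"
    then have "G \<subseteq> {lo + 2 * t..}" "finite G" "card G = r" "\<not> shifts_to G (stripe lo B s r j)"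
      unfolding U_def Z_def ksubsets_def using finite_subset by auto
    then obtain i where "i < r" "Suc i \<le> card (G \<inter> P i)"
      using not_shifts_to_stripe[OF finB(1) j] unfolding P_def by blast
    then show "G \<in> (\<Union>i<r. {G \<in> ksubsets Z r. Suc i \<le> card (G \<inter> P i)})"
      using G by auto
  qed
  then have "card (ksubsets Z r - U) \<le> card (\<Union>i<r. {G \<in> ksubsets Z r. Suc i \<le> card (G \<inter> P i)})"
    by (intro card_mono) (auto simp: Z_def)
  also have "\<dots> \<le> (\<Sum>i<r. card {G \<in> ksubsets Z r. Suc i \<le> card (G \<inter> P i)})"
    by (rule card_UN_le) simp
  also have "\<dots> \<le> (\<Sum>i<r. (((s + 1) * Suc i) choose Suc i) * ((card Z - Suc i) choose (r - Suc i)))"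
  proof (rule sum_mono)
    fix i
    assume "i \<in> {..<r}"
    then have "card {G \<in> ksubsets Z r. Suc i \<le> card (G \<inter> P i)}
        \<le> (card (P i) choose Suc i) * ((card Z - Suc i) choose (r - Suc i))"
      using P_sub by (intro card_ksubsets_meeting_ge) (auto simp: Z_def)
    also have "\<dots> \<le> (((s + 1) * Suc i) choose Suc i) * ((card Z - Suc i) choose (r - Suc i))"
      using \<open>i \<in> {..<r}\<close> card_P by (intro mult_right_mono binomial_right_mono) auto
    finally show "card {G \<in> ksubsets Z r. Suc i \<le> card (G \<inter> P i)}
        \<le> (((s + 1) * Suc i) choose Suc i) * ((card Z - Suc i) choose (r - Suc i))" .
  qed
  finally have "real (card (ksubsets Z r - U))
      \<le> (\<Sum>i<r. real (((s + 1) * Suc i) choose Suc i) * real ((card Z - Suc i) choose (r - Suc i)))"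
    by (metis (no_types, lifting) of_nat_le_iff of_nat_mult of_nat_sum sum.cong)
  moreover have "card (ksubsets Z r) = card U + card (ksubsets Z r - U)"
    using card_Int_Diff[of "ksubsets Z r" U] by (simp add: U_def Z_def Int_absorb1)
  ultimately show ?thesis
    using card_ksubsets[of Z r] unfolding U_def Z_def by simp
qed

lemma exists_block_index:
  fixes s L t c :: nat
  assumes s: "1 \<le> s" and L: "1 \<le> L" and le: "2 * s * t + L \<le> 2 * s * c"
  shows "\<exists>b\<ge>1. L \<le> 2 * s * b \<and> t + b \<le> c"
proof -
  define b where "b = (L - 1) div (2 * s) + 1"
  have div_mod: "L - 1 = 2 * s * ((L - 1) div (2 * s)) + (L - 1) mod (2 * s)"
    by simp
  have "(L - 1) mod (2 * s) < 2 * s"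
    using s by simp
  moreover have "2 * s * b = 2 * s * ((L - 1) div (2 * s)) + 2 * s"
    unfolding b_def by (simp add: distrib_left)
  ultimately have "L \<le> 2 * s * b"
    using div_mod L by linarith
  have "2 * s * (b - 1) \<le> L - 1"
    unfolding b_def using times_div_less_eq_dividend by simp
  then have "2 * s * (b - 1) < L"
    using L by linarith
  then have "2 * s * (t + (b - 1)) < 2 * s * c"
    using le \<open>L \<le> 2 * s * b\<close> by (simp add: distrib_left)
  then have "t + (b - 1) < c"
    by (metis mult_less_cancel1)
  then have "t + b \<le> c"
    unfolding b_def by simp
  then show ?thesis
    using \<open>L \<le> 2 * s * b\<close> b_def by auto
qed

lemma crowded_subset_UN:
  assumes s: "1 \<le> s"
  shows "crowded lo n s r t
    \<subseteq> (\<Union>b\<in>{1..r - t}. {B \<in> ksubsets {lo..n} r. t + b \<le> card (B \<inter> ({lo..n} \<inter> {..<lo + 2 * s * b}))})"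
proof
  fix B
  assume "B \<in> crowded lo n s r t"
  then obtain x where x: "x \<in> {lo..n}" "2 * s * t + (x + 1 - lo) \<le> 2 * s * card (B \<inter> {lo..x})"
    and B: "B \<in> ksubsets {lo..n} r"
    unfolding crowded_def by auto
  moreover have "1 \<le> x + 1 - lo"
    using x(1) by auto
  ultimately obtain b where b: "b \<ge> 1" "x + 1 - lo \<le> 2 * s * b" "t + b \<le> card (B \<inter> {lo..x})"
    using exists_block_index[OF s] by blast
  have "card (B \<inter> {lo..x}) \<le> card (B \<inter> ({lo..n} \<inter> {..<lo + 2 * s * b}))"
    using b(2) x(1) ksubsetsD[OF B] by (intro card_mono) auto
  then have "t + b \<le> card (B \<inter> ({lo..n} \<inter> {..<lo + 2 * s * b}))"
    using b by linarith
  moreover have "card (B \<inter> {lo..x}) \<le> r"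
    using ksubsetsD[OF B] by (metis card_mono finite_atLeastAtMost inf_le1)
  then have "b \<in> {1..r - t}"
    using b by auto
  ultimately show "B \<in> (\<Union>b\<in>{1..r - t}.
      {B \<in> ksubsets {lo..n} r. t + b \<le> card (B \<inter> ({lo..n} \<inter> {..<lo + 2 * s * b}))})"
    using B by blast
qed

lemma card_crowded_le:
  assumes s: "1 \<le> s"
  shows "card (crowded lo n s r t)
    \<le> (\<Sum>b\<in>{1..r - t}. ((2 * s * b) choose (t + b)) * ((card {lo..n} - (t + b)) choose (r - (t + b))))"
proof -
  define P where "P b = {lo..n} \<inter> {..<lo + 2 * s * b}" for b
  have "card (crowded lo n s r t) \<le> card (\<Union>b\<in>{1..r - t}. {B \<in> ksubsets {lo..n} r. t + b \<le> card (B \<inter> P b)})"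
    using crowded_subset_UN[OF s] unfolding P_def by (intro card_mono) auto
  also have "\<dots> \<le> (\<Sum>b\<in>{1..r - t}. card {B \<in> ksubsets {lo..n} r. t + b \<le> card (B \<inter> P b)})"
    by (rule card_UN_le) simp
  also have "\<dots> \<le> (\<Sum>b\<in>{1..r - t}.
      ((2 * s * b) choose (t + b)) * ((card {lo..n} - (t + b)) choose (r - (t + b))))"
  proof (rule sum_mono)
    fix b
    assume "b \<in> {1..r - t}"
    then have "card {B \<in> ksubsets {lo..n} r. t + b \<le> card (B \<inter> P b)}
        \<le> (card (P b) choose (t + b)) * ((card {lo..n} - (t + b)) choose (r - (t + b)))"
      by (intro card_ksubsets_meeting_ge) (auto simp: P_def)
    also have "\<dots> \<le> ((2 * s * b) choose (t + b)) * ((card {lo..n} - (t + b)) choose (r - (t + b)))"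
    proof (intro mult_right_mono binomial_right_mono)
      have "P b \<subseteq> {lo..<lo + 2 * s * b}"
        unfolding P_def by auto
      then show "card (P b) \<le> 2 * s * b"
        using card_mono[of "{lo..<lo + 2 * s * b}" "P b"] by simp
    qed simp
    finally show "card {B \<in> ksubsets {lo..n} r. t + b \<le> card (B \<inter> P b)}
        \<le> ((2 * s * b) choose (t + b)) * ((card {lo..n} - (t + b)) choose (r - (t + b)))" .
  qed
  finally show ?thesis .
qed

section \<open>Choosing the base set\<close>

lemma room_estimates_real:
  fixes S R m E :: real
  assumes S: "1 \<le> S" and R: "0 \<le> R" and E: "2 \<le> E" and m: "3 * E * (S + 1) * (R + 1) - (S + 1) \<le> m"
  shows "(S + 1) * R \<le> m" "E * (S + 1) * R \<le> (2/5) * (m - 2 * (R + 1))"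
    "6 * S * R + 2 * R + 3 \<le> m" "E * (2 * S) * R \<le> (2/3) * m"
proof -
  have m': "3 * (E * S * R) + 3 * (E * S) + 3 * (E * R) + 3 * E - (S + 1) \<le> m"
    using m by (simp add: algebra_simps)
  have bounds: "2 * (S * R) \<le> E * S * R" "2 * S \<le> E * S" "2 * R \<le> E * R" "R \<le> S * R"
    using S R E mult_right_mono[of 2 E "S * R"] mult_right_mono[of 1 S R]
    by (simp_all add: mult_right_mono mult.assoc)
  have expand: "E * (S + 1) * R = E * S * R + E * R" "E * (2 * S) * R = 2 * (E * S * R)"
    "(S + 1) * R = S * R + R" "6 * S * R = 6 * (S * R)"
    "(2/5) * (m - 2 * (R + 1)) = (2/5) * m - (4/5) * R - 4/5"
    by (simp_all add: algebra_simps)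
  show "6 * S * R + 2 * R + 3 \<le> m"
    using m' bounds expand E S R by argo
  show "(S + 1) * R \<le> m"
    using m' bounds expand E S R by argo
  show "E * (S + 1) * R \<le> (2/5) * (m - 2 * (R + 1))"
    using m' bounds expand E S R by argo
  show "E * (2 * S) * R \<le> (2/3) * m"
    using m' bounds expand E S R by argo
qed

lemma ninety_mult_less_four_thirds_pow: "40 \<le> n \<Longrightarrow> 90 * real n < (4/3) ^ n"
proof (induction n rule: dec_induct)
  case base
  have "(90::real) * 40 * 3 ^ 40 < 4 ^ 40"
    by simp
  then show ?case
    by (simp add: power_divide field_simps)
next
  case (step n)
  then show ?case
    by simp
qed

lemma weight_less_pow_if_le:
  fixes x C K :: real
  assumes s: "40 \<le> s" and t: "t \<le> s" and x: "0 \<le> x" "x < C / real s ^ 4"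
    and K: "0 \<le> K" "K \<le> 10 * real (s + 1)"
  shows "K * x < (1/3) * (1 - 1 / (6 * real s)) ^ (2 * t) * C"
proof -
  have "0 < C / real s ^ 4"
    using x by linarith
  then have C: "0 < C"
    using s by (simp add: zero_less_divide_iff)
  have "1 + real (2 * s) * (- 1 / (6 * real s)) \<le> (1 - 1 / (6 * real s)) ^ (2 * s)"
    using Bernoulli_inequality[of "- 1 / (6 * real s)" "2 * s"] s by (simp add: field_simps)
  also have "\<dots> \<le> (1 - 1 / (6 * real s)) ^ (2 * t)"
    using t s by (intro power_decreasing) (auto simp: field_simps)
  finally have two_thirds: "2/3 \<le> (1 - 1 / (6 * real s)) ^ (2 * t)"
    using s by (simp add: field_simps)
  have "45 * real (s + 1) \<le> real s ^ 4"
  proof -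
    have "40 * 40 * 40 \<le> real s * real s * real s"
      using s by (intro mult_mono) auto
    then have "90 * real s \<le> real s * real s * real s * real s"
      using s by (intro mult_right_mono) auto
    moreover have "real s ^ 4 = real s * real s * real s * real s"
      by (simp add: power4_eq_xxxx)
    moreover have "40 \<le> real s" "real (s + 1) = real s + 1"
      using s by simp_all
    ultimately show ?thesis
      by argo
  qed
  have "K * x \<le> 10 * real (s + 1) * x"
    using K x by (intro mult_right_mono) auto
  also have "\<dots> < 10 * real (s + 1) * (C / real s ^ 4)"
    using x by (intro mult_strict_left_mono) auto
  also have "\<dots> = (10 * real (s + 1) / real s ^ 4) * C"
    by simp
  also have "\<dots> \<le> (1/3) * (2/3) * C"
    using \<open>45 * real (s + 1) \<le> real s ^ 4\<close> C s by (intro mult_right_mono) (auto simp: divide_le_eq)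
  also have "\<dots> \<le> (1/3) * (1 - 1 / (6 * real s)) ^ (2 * t) * C"
    using two_thirds C by (intro mult_right_mono mult_left_mono) auto
  finally show ?thesis .
qed

lemma weight_less_pow_if_gt:
  fixes x C K :: real
  assumes s: "40 \<le> s" and t: "s < t" and x: "x \<le> 3 * (2/3) ^ t * C" and C: "0 < C"
    and K: "0 \<le> K" "K \<le> 10 * real (s + 1)"
  shows "K * x < (1/3) * (1 - 1 / (6 * real s)) ^ (2 * t) * C"
proof -
  have "(17/18::real) ^ 2 \<le> (1 - 1 / (6 * real s)) ^ 2"
    using s by (intro power_mono) (auto simp: field_simps)
  then have eight_ninths: "(8/9) ^ t \<le> (1 - 1 / (6 * real s)) ^ (2 * t)"
    by (simp add: power_mult power_mono power2_eq_square)
  have "90 * real (s + 1) < (4/3) ^ (s + 1)"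
    using ninety_mult_less_four_thirds_pow[of "s + 1"] s by simp
  also have "\<dots> \<le> (4/3) ^ t"
    using t by (intro power_increasing) auto
  finally have four_thirds: "90 * real (s + 1) < (4/3) ^ t" .
  have "K * x \<le> K * (3 * (2/3) ^ t * C)"
    using K x by (intro mult_left_mono) auto
  also have "\<dots> \<le> 10 * real (s + 1) * (3 * (2/3) ^ t * C)"
    using K C by (intro mult_right_mono) auto
  also have "\<dots> = (1/3) * (90 * real (s + 1)) * ((2/3) ^ t * C)"
    by simp
  also have "\<dots> < (1/3) * (4/3) ^ t * ((2/3) ^ t * C)"
    using four_thirds C by (intro mult_strict_right_mono mult_strict_left_mono) auto
  also have "\<dots> = (1/3) * (8/9) ^ t * C"
    by (simp add: power_mult_distrib[symmetric])
  also have "\<dots> \<le> (1/3) * (1 - 1 / (6 * real s)) ^ (2 * t) * C"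
    using eight_ninths C by (intro mult_right_mono mult_left_mono) auto
  finally show ?thesis .
qed

lemma room_estimates:
  assumes s: "1 \<le> s" and m: "3 * exp 1 * real (s + 1) * real (r + 1) - real (s + 1) \<le> real m"
  shows "(s + 1) * r \<le> m" "6 * s * r + 2 * r + 3 \<le> m"
    "exp 1 * real (s + 1) * real r \<le> (2/5) * (real m - 2 * real (r + 1))"
    "exp 1 * real (2 * s) * real r \<le> (2/3) * real m"
proof -
  have "2 \<le> exp (1::real)"
    using exp_ge_add_one_self[of 1] by simp
  note est = room_estimates_real[of "real s" "real r" "exp 1" "real m", OF _ _ this]
  have "real ((s + 1) * r) \<le> real m" "real (6 * s * r + 2 * r + 3) \<le> real m"
    using est s m by (simp_all add: algebra_simps)
  then show "(s + 1) * r \<le> m" "6 * s * r + 2 * r + 3 \<le> m"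
    by (simp_all only: of_nat_le_iff)
  show "exp 1 * real (s + 1) * real r \<le> (2/5) * (real m - 2 * real (r + 1))"
    "exp 1 * real (2 * s) * real r \<le> (2/3) * real m"
    using est s m by (simp_all add: algebra_simps)
qed

lemma obtain_least_uncrowded:
  assumes "1 \<le> s" "\<Phi> \<noteq> {}"
  obtains t B where "t \<le> r + 1" "B \<in> \<Phi>" "B \<notin> crowded lo n s r t"
    "\<And>t'. t' < t \<Longrightarrow> \<Phi> \<subseteq> crowded lo n s r t'"
proof -
  define t where "t = (LEAST t. \<not> \<Phi> \<subseteq> crowded lo n s r t)"
  have "\<not> \<Phi> \<subseteq> crowded lo n s r (r + 1)"
    using crowded_empty[OF assms(1)] assms(2) by simp
  then have "\<not> \<Phi> \<subseteq> crowded lo n s r t" "t \<le> r + 1"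
    unfolding t_def by (rule LeastI, rule Least_le)
  moreover have "\<Phi> \<subseteq> crowded lo n s r t'" if "t' < t" for t'
    using not_less_Least[OF that[unfolded t_def]] by blast
  ultimately show ?thesis
    using that by blast
qed

lemma card_crowded_le_pow:
  assumes "1 \<le> s" "exp 1 * real (2 * s) * real r \<le> (2/3) * real (card {lo..n})" "r \<le> card {lo..n}"
  shows "real (card (crowded lo n s r t)) \<le> 2 * (2/3) ^ t * real (card {lo..n} choose r)"
proof -
  have "real (card (crowded lo n s r t))
      \<le> real (\<Sum>b\<in>{1..r - t}. ((2 * s * b) choose (t + b))
           * ((card {lo..n} - (t + b)) choose (r - (t + b))))"
    using card_crowded_le[OF assms(1), of lo n r t] by (simp only: of_nat_le_iff)
  also have "\<dots> = (\<Sum>b\<in>{1..r - t}. real ((2 * s * b) choose (t + b))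
           * real ((card {lo..n} - (t + b)) choose (r - (t + b))))"
    by (simp add: of_nat_sum)
  also have "\<dots> \<le> 2 * (2/3) ^ t * real (card {lo..n} choose r)"
    by (rule sum_binomial_products_shifted_le[OF assms(2,3)])
  finally show ?thesis .
qed

lemma card_shifts_to_stripe_ge_pow:
  assumes s: "1 \<le> s" and B: "B \<in> ksubsets {lo..n} r" "B \<notin> crowded lo n s r t" and t: "t \<le> r + 1"
    and m: "3 * exp 1 * real (s + 1) * real (r + 1) - real (s + 1) \<le> real (card {lo..n})"
    and j: "j < s"
  shows "(1/3) * (1 - 1 / (6 * real s)) ^ (2 * t) * real (card {lo..n} choose r)
    \<le> real (card {G \<in> ksubsets {lo..n} r. shifts_to G (stripe lo B s r j)})"
proof -
  define m where "m = card {lo..n}"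
  define m' where "m' = card {lo + 2 * t..n}"
  note est = room_estimates[OF s m[folded m_def]]
  have m'_eq: "m' + 2 * t = m"
    using est(2) t unfolding m_def m'_def by simp
  have "6 * s * r \<le> m'" "0 < m'"
    using m'_eq est(2) t by auto
  moreover have "r \<le> 6 * s * r"
    using s by simp
  ultimately have "r \<le> m'"
    by linarith
  have "(1 - 1 / (6 * real s)) ^ (2 * t) * real (m choose r) \<le> real (m' choose r)"
    using binomial_add_pow_le[OF s \<open>6 * s * r \<le> m'\<close> \<open>0 < m'\<close>, of "2 * t"] m'_eq by simp
  moreover have "(\<Sum>i<r. real (((s + 1) * Suc i) choose Suc i) * real ((m' - Suc i) choose (r - Suc i)))
      \<le> (2/3) * real (m' choose r)"
  proof (intro sum_binomial_products_le \<open>r \<le> m'\<close>)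
    have "real m - 2 * real (r + 1) \<le> real m'"
      using m'_eq t by simp
    then show "exp 1 * real (s + 1) * real r \<le> (2/5) * real m'"
      using est(3) by argo
  qed
  moreover have "lo + s * r + r \<le> Suc n"
    using est(1,2) unfolding m_def by (simp add: algebra_simps)
  then have "real (m' choose r)
      - (\<Sum>i<r. real (((s + 1) * Suc i) choose Suc i) * real ((m' - Suc i) choose (r - Suc i)))
      \<le> real (card {G \<in> ksubsets {lo + 2 * t..n} r. shifts_to G (stripe lo B s r j)})"
    using card_shifts_to_stripe_ge[OF B s _ j] unfolding m'_def by simp
  moreover have "card {G \<in> ksubsets {lo + 2 * t..n} r. shifts_to G (stripe lo B s r j)}
      \<le> card {G \<in> ksubsets {lo..n} r. shifts_to G (stripe lo B s r j)}"
    by (intro card_mono) (auto simp: ksubsets_def)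
  ultimately show ?thesis
    unfolding m_def by linarith
qed

lemma weight_less_at_least_uncrowded:
  fixes \<Phi> :: "nat set set" and K :: real
  assumes s: "40 \<le> s"
    and m: "3 * exp 1 * real (s + 1) * real (r + 1) - real (s + 1) \<le> real (card {lo..n})"
    and small: "real (card \<Phi>) < real (card {lo..n} choose r) / real s ^ 4"
    and K: "0 \<le> K" "K \<le> 10 * real (s + 1)"
    and least: "\<And>t'. t' < t \<Longrightarrow> \<Phi> \<subseteq> crowded lo n s r t'"
  shows "K * real (card \<Phi>) < (1/3) * (1 - 1 / (6 * real s)) ^ (2 * t) * real (card {lo..n} choose r)"
proof -
  have s1: "1 \<le> s"
    using s by simp
  define C where "C = real (card {lo..n} choose r)"
  note est = room_estimates[OF s1 m]
  have "K * real (card \<Phi>) < (1/3) * (1 - 1 / (6 * real s)) ^ (2 * t) * C"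
  proof (cases "t \<le> s")
    case True
    then show ?thesis
      using weight_less_pow_if_le[OF s True _ small K] unfolding C_def by simp
  next
    case False
    have "0 < C / real s ^ 4"
      using small unfolding C_def by linarith
    then have C_pos: "0 < C"
      using s by (simp add: zero_less_divide_iff)
    have "r \<le> (s + 1) * r"
      by simp
    then have "r \<le> card {lo..n}"
      using est(1) by linarith
    have "\<Phi> \<subseteq> crowded lo n s r (t - 1)"
      using least False by simp
    moreover have "finite (crowded lo n s r (t - 1))"
      by (rule finite_subset[of _ "ksubsets {lo..n} r"]) (auto simp: crowded_def)
    ultimately have "card \<Phi> \<le> card (crowded lo n s r (t - 1))"
      by (simp add: card_mono)
    then have "real (card \<Phi>) \<le> 2 * (2/3) ^ (t - 1) * C"
      using card_crowded_le_pow[OF s1 est(4) \<open>r \<le> card {lo..n}\<close>, of "t - 1"] unfolding C_def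
      by linarith
    also have "\<dots> = 3 * (2/3) ^ t * C"
      using False by (cases t) auto
    finally show ?thesis
      using weight_less_pow_if_gt[OF s _ _ C_pos K] False by simp
  qed
  then show ?thesis
    unfolding C_def .
qed

lemma obtain_base_with_stripes:
  fixes \<Phi> :: "nat set set" and K :: real
  assumes s: "40 \<le> s" and \<Phi>: "\<Phi> \<subseteq> ksubsets {lo..n} r" "\<Phi> \<noteq> {}"
    and m: "3 * exp 1 * real (s + 1) * real (r + 1) - real (s + 1) \<le> real (card {lo..n})"
    and small: "real (card \<Phi>) < real (card {lo..n} choose r) / real s ^ 4"
    and K: "0 \<le> K" "K \<le> 10 * real (s + 1)"
  obtains B R where "B \<in> \<Phi>"
    "\<And>x. x \<in> {1..s} \<Longrightarrow> R x \<in> ksubsets {lo..n} r \<and> R x \<inter> B = {}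
      \<and> K * real (card \<Phi>) < real (card {G \<in> ksubsets {lo..n} r. shifts_to G (R x)})"
    "\<And>x y. x \<in> {1..s} \<Longrightarrow> y \<in> {1..s} \<Longrightarrow> x \<noteq> y \<Longrightarrow> R x \<inter> R y = {}"
proof -
  have s1: "1 \<le> s"
    using s by simp
  note est = room_estimates[OF s1 m]
  obtain t B where t: "t \<le> r + 1" and B: "B \<in> \<Phi>" "B \<notin> crowded lo n s r t"
    and least: "\<And>t'. t' < t \<Longrightarrow> \<Phi> \<subseteq> crowded lo n s r t'"
    using obtain_least_uncrowded[OF s1 \<Phi>(2)] by blast
  have weight: "K * real (card \<Phi>) < (1/3) * (1 - 1 / (6 * real s)) ^ (2 * t) * real (card {lo..n} choose r)"
    using weight_less_at_least_uncrowded[OF s m small K least] .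
  have B_sub: "B \<in> ksubsets {lo..n} r"
    using B \<Phi> by auto
  then have finB: "finite B" "card B = r"
    by (auto dest: ksubsetsD)
  have room: "lo + s * r + r \<le> Suc n"
    using est(1,2) by (simp add: algebra_simps)
  show ?thesis
  proof (rule that[of B "\<lambda>x. stripe lo B s r (x - 1)"])
    show "B \<in> \<Phi>"
      using B by simp
  next
    fix x
    assume "x \<in> {1..s}"
    then have j: "x - 1 < s"
      by auto
    have "stripe lo B s r (x - 1) \<in> ksubsets {lo..n} r"
      unfolding ksubsets_def using stripe_subset[OF finB(1) j finB(2) room] card_stripe[OF finB(1) j] by simp
    moreover have "stripe lo B s r (x - 1) \<inter> B = {}"
      by (rule stripe_Int_base[OF finB(1)])
    moreover have "K * real (card \<Phi>)
        < real (card {G \<in> ksubsets {lo..n} r. shifts_to G (stripe lo B s r (x - 1))})"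
      using weight card_shifts_to_stripe_ge_pow[OF s1 B_sub B(2) t m j] by linarith
    ultimately show "stripe lo B s r (x - 1) \<in> ksubsets {lo..n} r \<and> stripe lo B s r (x - 1) \<inter> B = {}
      \<and> K * real (card \<Phi>) < real (card {G \<in> ksubsets {lo..n} r. shifts_to G (stripe lo B s r (x - 1))})"
      by blast
  next
    fix x y
    assume "x \<in> {1..s}" "y \<in> {1..s}" "x \<noteq> y"
    then show "stripe lo B s r (x - 1) \<inter> stripe lo B s r (y - 1) = {}"
      by (intro stripe_disjoint[OF finB(1)]) auto
  qed
qed

section \<open>The families\<close>

lemma famA_complement:
  assumes "H \<in> ksubsets {1..n} k"
  shows "H \<notin> famA n k s \<longleftrightarrow> H \<subseteq> {s + 1..n}"
proof -
  have "\<And>x. x \<in> {1..n} \<Longrightarrow> x \<notin> {1..s} \<Longrightarrow> x \<in> {s + 1..n}" "\<And>x. x \<in> {s + 1..n} \<Longrightarrow> x \<notin> {1..s}"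
    by auto
  then show ?thesis
    using assms unfolding famA_def ksubsets_def by blast
qed

lemma card_famA: "card (famA n k s) = (n choose k) - ((n - s) choose k)"
proof -
  have sub: "famA n k s \<subseteq> ksubsets {1..n} k"
    unfolding famA_def by blast
  have "ksubsets {1..n} k - famA n k s = {F \<in> ksubsets {1..n} k. F \<subseteq> {s + 1..n}}"
    using famA_complement by blast
  also have "\<dots> = ksubsets {s + 1..n} k"
    unfolding ksubsets_def by auto
  finally have "card (ksubsets {s + 1..n} k) = card (ksubsets {1..n} k) - card (famA n k s)"
    using card_Diff_subset[OF finite_subset[OF sub] sub] by simp
  moreover have "card (famA n k s) \<le> card (ksubsets {1..n} k)"
    using sub by (simp add: card_mono)
  ultimately show ?thesis
    by (simp add: card_ksubsets)
qed

lemma restr_Suc_eq: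
  assumes "G \<subseteq> ksubsets {1..n} k"
  shows "restr s G (s + 1) = {R \<in> ksubsets {s + 2..n} (k - 1). insert (s + 1) R \<in> G}"
proof (intro equalityI subsetI)
  fix R
  assume "R \<in> restr s G (s + 1)"
  then obtain H where H: "H \<in> G" "H \<inter> {1..s + 1} = {s + 1}" "R = H - {s + 1}"
    unfolding restr_def by blast
  have H_sub: "H \<subseteq> {1..n}" "card H = k" "finite H"
    using ksubsetsD[of H "{1..n}" k] assms H(1) by auto
  have "s + 1 \<in> H"
    using H(2) by blast
  have "R \<subseteq> {s + 2..n}"
  proof
    fix x
    assume "x \<in> R"
    then have "x \<in> H" "x \<noteq> s + 1"
      using H(3) by auto
    then have "x \<notin> {1..s + 1}" "x \<in> {1..n}"
      using H(2) H_sub(1) by blast+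
    then show "x \<in> {s + 2..n}"
      by auto
  qed
  moreover have "card R = k - 1"
    using H(3) H_sub \<open>s + 1 \<in> H\<close> by simp
  moreover have "insert (s + 1) R = H"
    using H(3) \<open>s + 1 \<in> H\<close> by blast
  ultimately show "R \<in> {R \<in> ksubsets {s + 2..n} (k - 1). insert (s + 1) R \<in> G}"
    using H(1) unfolding ksubsets_def by simp
next
  fix R
  assume "R \<in> {R \<in> ksubsets {s + 2..n} (k - 1). insert (s + 1) R \<in> G}"
  then have "R \<subseteq> {s + 2..n}" "insert (s + 1) R \<in> G"
    unfolding ksubsets_def by auto
  moreover have "insert (s + 1) R \<inter> {1..s + 1} = {s + 1}" "R = insert (s + 1) R - {s + 1}"
    using calculation(1) by auto
  ultimately show "R \<in> restr s G (s + 1)"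
    unfolding restr_def by blast
qed

lemma Int_atLeastAtMost_Suc_eq_singleton:
  fixes H :: "nat set"
  shows "H \<inter> {1..s + 1} = {s + 1} \<longleftrightarrow> s + 1 \<in> H \<and> H \<inter> {1..s} = {}"
proof
  assume h: "H \<inter> {1..s + 1} = {s + 1}"
  have "x \<notin> H" if "x \<in> {1..s}" for x
  proof
    assume "x \<in> H"
    then have "x \<in> H \<inter> {1..s + 1}"
      using that by auto
    then have "x = s + 1"
      unfolding h by simp
    then show False
      using that by simp
  qed
  moreover have "s + 1 \<in> H"
    using h by (metis IntD1 singletonI)
  ultimately show "s + 1 \<in> H \<and> H \<inter> {1..s} = {}"
    by blast
next
  assume "s + 1 \<in> H \<and> H \<inter> {1..s} = {}"
  then show "H \<inter> {1..s + 1} = {s + 1}"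
    by (auto simp: le_Suc_eq)
qed
lemma card_famA_diff_containing:
  assumes "G \<subseteq> ksubsets {1..n} k"
  shows "card {H \<in> G - famA n k s. s + 1 \<in> H} = card (restr s G (s + 1))"
proof -
  have "H \<notin> famA n k s \<longleftrightarrow> H \<inter> {1..s} = {}" if "H \<in> G" for H
    using that assms unfolding famA_def by blast
  then have "{H \<in> G - famA n k s. s + 1 \<in> H} = {H \<in> G. H \<inter> {1..s + 1} = {s + 1}}"
    unfolding Int_atLeastAtMost_Suc_eq_singleton by blast
  moreover have "restr s G (s + 1) = (\<lambda>H. H - {s + 1}) ` {H \<in> G. H \<inter> {1..s + 1} = {s + 1}}"
    unfolding restr_def by blast
  moreover have "inj_on (\<lambda>H. H - {s + 1}) {H \<in> G. H \<inter> {1..s + 1} = {s + 1}}"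
    unfolding Int_atLeastAtMost_Suc_eq_singleton by (rule inj_onI) (metis insert_Diff mem_Collect_eq)
  ultimately show ?thesis
    by (simp add: card_image)
qed

lemma exchange_mem_restr:
  assumes G: "G \<subseteq> ksubsets {1..n} k" "shifted n G" and n: "s + 1 \<le> n"
    and H: "H \<in> G" "H \<subseteq> {s + 2..n}" and z: "z \<in> H"
  shows "H - {z} \<in> restr s G (s + 1)"
proof -
  have "s + 1 \<notin> H" "z \<in> {s + 2..n}"
    using H(2) z by auto
  then have "insert (s + 1) (H - {z}) \<in> G"
    using H(1) z n by (intro shifted_exchange[OF G(2)]) auto
  moreover have "H \<in> ksubsets {1..n} k"
    using G(1) H(1) by blast
  then have "card H = k" "finite H"
    using ksubsetsD[of H "{1..n}" k] by simp_all
  then have "H - {z} \<in> ksubsets {s + 2..n} (k - 1)"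
    using H(2) z unfolding ksubsets_def by auto
  ultimately show ?thesis
    unfolding restr_Suc_eq[OF G(1)] by simp
qed

lemma inj_on_remove_point: "inj_on (\<lambda>(H, z). (H - {z}, z)) (SIGMA H:E. H)"
proof (rule inj_onI)
  fix a b
  assume "a \<in> (SIGMA H:E. H)" "b \<in> (SIGMA H:E. H)" and eq: "(\<lambda>(H, z). (H - {z}, z)) a = (\<lambda>(H, z). (H - {z}, z)) b"
  then obtain H z H' z' where ab: "a = (H, z)" "b = (H', z')" and "z \<in> H" "z' \<in> H'"
    by auto
  moreover have "H - {z} = H' - {z'}" "z = z'"
    using eq unfolding ab by auto
  ultimately show "a = b"
    by (metis insert_Diff)
qed

lemma famA_diff_avoiding_subset:
  assumes "G \<subseteq> ksubsets {1..n} k" "H \<in> G - famA n k s" "s + 1 \<notin> H"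
  shows "H \<subseteq> {s + 2..n}"
proof
  fix x
  assume "x \<in> H"
  moreover have "H \<subseteq> {s + 1..n}"
    using assms(1,2) famA_complement by blast
  ultimately have "x \<in> {s + 1..n}" "x \<noteq> s + 1"
    using assms(3) by auto
  then show "x \<in> {s + 2..n}"
    by auto
qed

lemma card_famA_diff_avoiding:
  assumes G: "G \<subseteq> ksubsets {1..n} k" "shifted n G" and n: "s + 1 \<le> n"
  shows "k * card {H \<in> G - famA n k s. s + 1 \<notin> H} \<le> card (restr s G (s + 1)) * (n - s - 1)"
proof -
  define E where "E = {H \<in> G - famA n k s. s + 1 \<notin> H}"
  define P where "P = (SIGMA H:E. H)"
  have E: "H \<in> G" "H \<subseteq> {s + 2..n}" "card H = k" if "H \<in> E" for H
    using that famA_diff_avoiding_subset[OF G(1)] ksubsetsD[of H "{1..n}" k] G(1)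
    unfolding E_def by auto
  have "finite E"
    unfolding E_def using G(1) by (auto intro: finite_subset)
  moreover have "finite H" if "H \<in> E" for H
    using E(2)[OF that] by (rule finite_subset) simp
  ultimately have "card P = (\<Sum>H\<in>E. card H)"
    unfolding P_def by (simp add: card_SigmaI)
  also have "\<dots> = k * card E"
    using E(3) by simp
  finally have "card P = k * card E" .
  have "(\<lambda>(H, z). (H - {z}, z)) ` P \<subseteq> restr s G (s + 1) \<times> {s + 2..n}"
  proof
    fix q
    assume "q \<in> (\<lambda>(H, z). (H - {z}, z)) ` P"
    then obtain H z where H: "H \<in> E" "z \<in> H" and q: "q = (H - {z}, z)"
      unfolding P_def by auto
    have "H - {z} \<in> restr s G (s + 1)"
      by (rule exchange_mem_restr[OF G n E(1,2)[OF H(1)] H(2)])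
    moreover have "z \<in> {s + 2..n}"
      using E(2)[OF H(1)] H(2) by blast
    ultimately show "q \<in> restr s G (s + 1) \<times> {s + 2..n}"
      unfolding q by simp
  qed
  moreover have "finite (restr s G (s + 1) \<times> {s + 2..n})"
    unfolding restr_Suc_eq[OF G(1)] by simp
  ultimately have "card P \<le> card (restr s G (s + 1) \<times> {s + 2..n})"
    using card_inj_on_le inj_on_remove_point unfolding P_def by blast
  then show ?thesis
    using \<open>card P = k * card E\<close> unfolding E_def by (simp add: card_cartesian_product)
qed

lemma card_diff_famA_le:
  assumes "G \<subseteq> ksubsets {1..n} k" "shifted n G" "s + 1 \<le> n"
  shows "k * card (G - famA n k s) \<le> (k + (n - s - 1)) * card (restr s G (s + 1))"
proof -
  have "finite (G - famA n k s)"
    using assms(1) by (auto intro: finite_subset)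
  moreover have "{H \<in> G - famA n k s. s + 1 \<in> H} = (G - famA n k s) \<inter> {H. s + 1 \<in> H}"
    "{H \<in> G - famA n k s. s + 1 \<notin> H} = (G - famA n k s) - {H. s + 1 \<in> H}"
    by auto
  ultimately have "card (G - famA n k s)
      = card {H \<in> G - famA n k s. s + 1 \<in> H} + card {H \<in> G - famA n k s. s + 1 \<notin> H}"
    using card_Int_Diff by metis
  then show ?thesis
    using card_famA_diff_containing[OF assms(1)] card_famA_diff_avoiding[OF assms]
    by (simp add: algebra_simps)
qed

lemma card_Diff_le_card_Diff_swap:
  assumes "finite A" "finite B" "card A \<le> card B"
  shows "card (A - B) \<le> card (B - A)"
  using assms card_Int_Diff[of A B] card_Int_Diff[of B A] by (simp add: Int_commute)

lemma card_famA_diff_le_weight: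
  assumes F: "F \<subseteq> ksubsets {1..n} k" "shifted n F" and n: "s + 1 \<le> n" and k: "0 < k"
    and large: "card (famA n k s) \<le> card F"
  shows "real (card (famA n k s - F))
    \<le> (real k + real (n - s - 1)) / real k * real (card (restr s F (s + 1)))"
proof -
  have "finite (famA n k s)" "finite F"
    using F(1) by (auto intro: finite_subset simp: famA_def)
  then have "card (famA n k s - F) \<le> card (F - famA n k s)"
    using large by (rule card_Diff_le_card_Diff_swap)
  then have "k * card (famA n k s - F) \<le> (k + (n - s - 1)) * card (restr s F (s + 1))"
    using card_diff_famA_le[OF F n] by (meson le_trans mult_le_mono2)
  then have "real k * real (card (famA n k s - F))
      \<le> (real k + real (n - s - 1)) * real (card (restr s F (s + 1)))"
    by (metis of_nat_add of_nat_le_iff of_nat_mult)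
  then show ?thesis
    using k by (simp add: field_simps)
qed

lemma restr_nonempty_if_ne_famA:
  assumes F: "F \<subseteq> ksubsets {1..n} k" "shifted n F" and n: "s + 1 \<le> n" and k: "0 < k"
    and large: "card (famA n k s) \<le> card F" and ne: "F \<noteq> famA n k s"
  shows "restr s F (s + 1) \<noteq> {}"
proof
  assume "restr s F (s + 1) = {}"
  then have "F - famA n k s = {}"
    using card_diff_famA_le[OF F n] k F(1) by (simp add: finite_subset)
  moreover have "finite (famA n k s)"
    by (rule finite_subset[of _ "ksubsets {1..n} k"]) (auto simp: famA_def)
  ultimately show False
    using large ne by (metis Diff_eq_empty_iff card_seteq)
qed

lemma insert_mem_if_many_shifts:
  assumes F: "F \<subseteq> ksubsets {1..n} k" "shifted n F" and x: "x \<in> {1..s}" and sn: "s \<le> n"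
    and R: "R \<in> ksubsets {s + 2..n} (k - 1)" and k: "0 < k"
    and many: "card (famA n k s - F) < card {G \<in> ksubsets {s + 2..n} (k - 1). shifts_to G R}"
  shows "insert x R \<in> F"
proof (rule ccontr)
  assume not_mem: "insert x R \<notin> F"
  define U where "U = {G \<in> ksubsets {s + 2..n} (k - 1). shifts_to G R}"
  have R': "R \<subseteq> {1..n}" "finite R" "card R = k - 1" "x \<notin> R"
    using ksubsetsD[OF R] x by auto
  have "insert x ` U \<subseteq> famA n k s - F"
  proof
    fix H
    assume "H \<in> insert x ` U"
    then obtain G where G: "G \<in> U" and H: "H = insert x G"
      by auto
    have G': "G \<subseteq> {s + 2..n}" "finite G" "card G = k - 1" "shifts_to G R" "x \<notin> G"
      using G ksubsetsD[of G "{s + 2..n}" "k - 1"] x unfolding U_def by auto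
    have "H \<notin> F"
    proof
      assume "H \<in> F"
      then have "insert x R \<in> F"
        using shifted_insert_shifts_to[OF F(2) R'(1) R'(4) G'(2) R'(2)] G' R'(3) H by simp
      then show False
        using not_mem by simp
    qed
    moreover have "H \<subseteq> {1..n}" "card H = k" "H \<inter> {1..s} \<noteq> {}"
      using G' x sn k H by auto
    ultimately show "H \<in> famA n k s - F"
      unfolding famA_def ksubsets_def by simp
  qed
  moreover have "x \<notin> G" if "G \<in> U" for G
    using that x unfolding U_def ksubsets_def by auto
  then have "inj_on (insert x) U"
    by (meson inj_onI insert_ident)
  moreover have "finite (famA n k s - F)"
    by (rule finite_subset[of _ "ksubsets {1..n} k"]) (auto simp: famA_def)
  ultimately have "card U \<le> card (famA n k s - F)"
    using card_inj_on_le by blast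
  then show False
    using many unfolding U_def by simp
qed

lemma not_cross_dependent_if_transversal:
  assumes a: "a \<in> {1..s + 1}" and B: "insert (s + 1) B \<in> F a" "B \<subseteq> {s + 2..}"
    and R: "\<And>x. x \<in> {1..s} \<Longrightarrow> R x \<subseteq> {s + 2..} \<and> R x \<inter> B = {}"
    and R_disjoint: "\<And>x y. x \<in> {1..s} \<Longrightarrow> y \<in> {1..s} \<Longrightarrow> x \<noteq> y \<Longrightarrow> R x \<inter> R y = {}"
    and mem: "\<And>i x. i \<in> {1..s + 1} \<Longrightarrow> x \<in> {1..s} \<Longrightarrow> insert x (R x) \<in> F i"
  shows "\<not> cross_dependent s F"
proof -
  define p where "p i = (if i < a then i else i - 1)" for i :: nat
  define T where "T i = (if i = a then insert (s + 1) B else insert (p i) (R (p i)))" for i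
  have p: "p i \<in> {1..s}" if "i \<in> {1..s + 1}" "i \<noteq> a" for i
    using that a unfolding p_def by auto
  have p_inj: "p i \<noteq> p j" if "i \<in> {1..s + 1}" "j \<in> {1..s + 1}" "i \<noteq> a" "j \<noteq> a" "i \<noteq> j" for i j
    using that a unfolding p_def by auto
  have T_mem: "T i \<in> F i" if "i \<in> {1..s + 1}" for i
    using that B(1) mem p unfolding T_def by auto
  have T_a: "T a \<inter> T j = {}" if "j \<in> {1..s + 1}" "j \<noteq> a" for j
    using that p[OF that] R[OF p[OF that]] B(2) unfolding T_def by auto
  have "T i \<inter> T j = {}" if "i \<in> {1..s + 1}" "j \<in> {1..s + 1}" "i \<noteq> j" for i j
  proof (cases "i = a \<or> j = a")
    case True
    then show ?thesis
      using T_a that by blast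
  next
    case False
    then have "p i \<in> {1..s}" "p j \<in> {1..s}" "p i \<noteq> p j"
      using that p p_inj by auto
    moreover have "T i = insert (p i) (R (p i))" "T j = insert (p j) (R (p j))"
      using False unfolding T_def by auto
    ultimately show ?thesis
      using R[of "p i"] R[of "p j"] R_disjoint[of "p i" "p j"] by auto
  qed
  then show ?thesis
    using T_mem unfolding cross_dependent_def by blast
qed

lemma ceiling_size_bounds:
  assumes k: "0 < k" and n: "n = nat \<lceil>3 * exp 1 * real (s + 1) * real k\<rceil>"
  shows "s + 2 \<le> n" "3 * exp 1 * real (s + 1) * real k - real (s + 1) \<le> real (n - s - 1)"
    "(real k + real (n - s - 1)) / real k \<le> 10 * real (s + 1)"
proof -
  define x where "x = 3 * exp 1 * real (s + 1) * real k"
  have "real n = real_of_int \<lceil>x\<rceil>"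
    unfolding n x_def by simp
  then have nx: "x \<le> real n" "real n \<le> x + 1"
    by (simp_all add: le_of_int_ceiling of_int_ceiling_le_add_one)
  have "3 * 2 * real (s + 1) * 1 \<le> x"
    unfolding x_def using exp_ge_add_one_self[of 1] k by (intro mult_mono) auto
  then have "real (s + 2) \<le> real n"
    using nx by simp
  then show "s + 2 \<le> n"
    by (simp only: of_nat_le_iff)
  then have m: "real (n - s - 1) = real n - real s - 1"
    by (simp add: of_nat_diff)
  then show "3 * exp 1 * real (s + 1) * real k - real (s + 1) \<le> real (n - s - 1)"
    using nx unfolding x_def by simp
  have "x \<le> 9 * real (s + 1) * real k"
    unfolding x_def using exp_le by (intro mult_right_mono) auto
  then have "real (n - s - 1) / real k \<le> 9 * real (s + 1)"
    using m nx k by (simp add: divide_le_eq)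
  moreover have "(real k + real (n - s - 1)) / real k = 1 + real (n - s - 1) / real k"
    using k by (simp add: field_simps)
  ultimately show "(real k + real (n - s - 1)) / real k \<le> 10 * real (s + 1)"
    by simp
qed

lemma obtain_largest_restr:
  fixes F :: "nat \<Rightarrow> nat set set"
  assumes F: "\<And>i. i \<in> {1..s + 1} \<Longrightarrow>
      F i \<subseteq> ksubsets {1..n} k \<and> shifted n (F i) \<and> card (famA n k s) \<le> card (F i)"
    and n: "s + 1 \<le> n" and k: "0 < k" and ne: "\<exists>i\<in>{1..s + 1}. F i \<noteq> famA n k s"
  obtains a where "a \<in> {1..s + 1}" "restr s (F a) (s + 1) \<noteq> {}"
    "\<And>i. i \<in> {1..s + 1} \<Longrightarrow> card (restr s (F i) (s + 1)) \<le> card (restr s (F a) (s + 1))"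
proof -
  define M where "M = Max ((\<lambda>i. card (restr s (F i) (s + 1))) ` {1..s + 1})"
  have "M \<in> (\<lambda>i. card (restr s (F i) (s + 1))) ` {1..s + 1}"
    unfolding M_def by (rule Max_in) auto
  then obtain a where "M = card (restr s (F a) (s + 1))" "a \<in> {1..s + 1}"
    by (rule imageE)
  moreover have "card (restr s (F i) (s + 1)) \<le> M" if "i \<in> {1..s + 1}" for i
    unfolding M_def using that by (intro Max_ge) auto
  ultimately have a: "a \<in> {1..s + 1}"
    "\<And>i. i \<in> {1..s + 1} \<Longrightarrow> card (restr s (F i) (s + 1)) \<le> card (restr s (F a) (s + 1))"
    by simp_all
  obtain i where i: "i \<in> {1..s + 1}" "F i \<noteq> famA n k s"
    using ne by blast
  have Fi: "F i \<subseteq> ksubsets {1..n} k" "shifted n (F i)" "card (famA n k s) \<le> card (F i)"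
    using F[OF i(1)] by simp_all
  have "restr s (F i) (s + 1) \<noteq> {}"
    by (rule restr_nonempty_if_ne_famA[OF Fi(1,2) n k Fi(3) i(2)])
  moreover have "finite (restr s (F i) (s + 1))"
    unfolding restr_Suc_eq[OF Fi(1)] by simp
  ultimately have "0 < card (restr s (F i) (s + 1))"
    by (simp add: card_gt_0_iff)
  then have "0 < card (restr s (F a) (s + 1))"
    using a(2)[OF i(1)] by linarith
  then show ?thesis
    using that a by (metis card.empty less_irrefl)
qed

lemma obtain_transversal_data:
  fixes F :: "nat \<Rightarrow> nat set set"
  assumes k: "0 < k" and s: "40 \<le> s" and n: "n = nat \<lceil>3 * exp 1 * real (s + 1) * real k\<rceil>"
    and F: "\<And>i. i \<in> {1..s + 1} \<Longrightarrow>
      F i \<subseteq> ksubsets {1..n} k \<and> shifted n (F i) \<and> card (famA n k s) \<le> card (F i)"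
    and small: "\<And>i. i \<in> {1..s + 1} \<Longrightarrow>
      real (card (restr s (F i) (s + 1))) < (1 / real s ^ 4) * real ((n - s - 1) choose (k - 1))"
    and ne: "\<exists>i\<in>{1..s + 1}. F i \<noteq> famA n k s"
  obtains a B R where "a \<in> {1..s + 1}" "insert (s + 1) B \<in> F a" "B \<subseteq> {s + 2..}"
    "\<And>x. x \<in> {1..s} \<Longrightarrow> R x \<subseteq> {s + 2..} \<and> R x \<inter> B = {}"
    "\<And>x y. x \<in> {1..s} \<Longrightarrow> y \<in> {1..s} \<Longrightarrow> x \<noteq> y \<Longrightarrow> R x \<inter> R y = {}"
    "\<And>i x. i \<in> {1..s + 1} \<Longrightarrow> x \<in> {1..s} \<Longrightarrow> insert x (R x) \<in> F i"
proof -
  define \<Phi> where "\<Phi> i = restr s (F i) (s + 1)" for i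
  define K where "K = (real k + real (n - s - 1)) / real k"
  note size = ceiling_size_bounds[OF k n]
  have Fi: "F i \<subseteq> ksubsets {1..n} k" "shifted n (F i)" "card (famA n k s) \<le> card (F i)"
    if "i \<in> {1..s + 1}" for i
    using F[OF that] by simp_all
  have "s + 1 \<le> n"
    using size(1) by simp
  obtain a where a: "a \<in> {1..s + 1}" "\<Phi> a \<noteq> {}" "\<And>i. i \<in> {1..s + 1} \<Longrightarrow> card (\<Phi> i) \<le> card (\<Phi> a)"
    using obtain_largest_restr[OF F \<open>s + 1 \<le> n\<close> k ne] unfolding \<Phi>_def by blast
  have \<Phi>_a: "\<Phi> a = {R \<in> ksubsets {s + 2..n} (k - 1). insert (s + 1) R \<in> F a}"
    unfolding \<Phi>_def using Fi(1)[OF a(1)] by (rule restr_Suc_eq)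
  have K: "0 \<le> K" "K \<le> 10 * real (s + 1)"
    unfolding K_def using size(3) by simp_all
  have "\<Phi> a \<subseteq> ksubsets {s + 2..n} (k - 1)"
    unfolding \<Phi>_a by auto
  moreover have "3 * exp 1 * real (s + 1) * real (k - 1 + 1) - real (s + 1) \<le> real (card {s + 2..n})"
    using size(2) k by simp
  moreover have "real (card (\<Phi> a)) < real (card {s + 2..n} choose (k - 1)) / real s ^ 4"
    using small[OF a(1)] unfolding \<Phi>_def by simp
  ultimately obtain B R where B: "B \<in> \<Phi> a"
    and R: "\<And>x. x \<in> {1..s} \<Longrightarrow> R x \<in> ksubsets {s + 2..n} (k - 1) \<and> R x \<inter> B = {}
      \<and> K * real (card (\<Phi> a)) < real (card {G \<in> ksubsets {s + 2..n} (k - 1). shifts_to G (R x)})"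
    and R_disjoint: "\<And>x y. x \<in> {1..s} \<Longrightarrow> y \<in> {1..s} \<Longrightarrow> x \<noteq> y \<Longrightarrow> R x \<inter> R y = {}"
    by (rule obtain_base_with_stripes[OF s _ a(2) _ _ K]) (rule that)
  have many: "card (famA n k s - F i) < card {G \<in> ksubsets {s + 2..n} (k - 1). shifts_to G (R x)}"
    if "i \<in> {1..s + 1}" "x \<in> {1..s}" for i x
  proof -
    have "real (card (famA n k s - F i)) \<le> K * real (card (\<Phi> i))"
      unfolding K_def \<Phi>_def by (rule card_famA_diff_le_weight[OF Fi(1,2)[OF that(1)] \<open>s + 1 \<le> n\<close> k Fi(3)[OF that(1)]])
    also have "\<dots> \<le> K * real (card (\<Phi> a))"
      using a(3)[OF that(1)] K(1) by (intro mult_left_mono) auto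
    finally show ?thesis
      using R[OF that(2)] by linarith
  qed
  have "s \<le> n"
    using size(1) by simp
  then have "insert x (R x) \<in> F i" if "i \<in> {1..s + 1}" "x \<in> {1..s}" for i x
    using R[OF that(2)] insert_mem_if_many_shifts[OF Fi(1,2)[OF that(1)] that(2) \<open>s \<le> n\<close> _ k many[OF that]]
    by blast
  moreover have "insert (s + 1) B \<in> F a" "B \<subseteq> {s + 2..}"
    using B unfolding \<Phi>_a ksubsets_def by auto
  moreover have "R x \<subseteq> {s + 2..} \<and> R x \<inter> B = {}" if "x \<in> {1..s}" for x
    using R[OF that] unfolding ksubsets_def by auto
  ultimately show ?thesis
    using that a(1) R_disjoint by blast
qed

theorem lemma1:
  fixes s k n :: nat and F :: "nat \<Rightarrow> nat set set"
  assumes "k > 0" and "s > 2 * 10^6"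
    and "n = nat \<lceil>3 * exp 1 * real (s + 1) * real k\<rceil>"
    and "\<forall>i\<in>{1..s+1}. F i \<subseteq> ksubsets {1..n} k"
    and "\<forall>i\<in>{1..s+1}. shifted n (F i)"
    and "cross_dependent s F"
    and "\<forall>i\<in>{1..s+1}. real (card (restr s (F i) (s+1)))
            < (1 / real s ^ 4) * real ((n - s - 1) choose (k - 1))"
    and "\<exists>i\<in>{1..s+1}. F i \<noteq> famA n k s"
  shows "Min ((\<lambda>i. card (F i)) ` {1..s+1}) < (n choose k) - ((n - s) choose k)"
proof (rule ccontr)
  assume not_less: "\<not> ?thesis"
  have "card (famA n k s) \<le> card (F i)" if "i \<in> {1..s + 1}" for i
  proof -
    have "Min ((\<lambda>i. card (F i)) ` {1..s + 1}) \<le> card (F i)"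
      using that by (intro Min_le) auto
    then show ?thesis
      using not_less card_famA[of n k s] by linarith
  qed
  then have F: "F i \<subseteq> ksubsets {1..n} k \<and> shifted n (F i) \<and> card (famA n k s) \<le> card (F i)"
    if "i \<in> {1..s + 1}" for i
    using assms(4,5) that by blast
  have "40 \<le> s"
    using assms(2) by simp
  obtain a B R where "a \<in> {1..s + 1}" "insert (s + 1) B \<in> F a" "B \<subseteq> {s + 2..}"
    "\<And>x. x \<in> {1..s} \<Longrightarrow> R x \<subseteq> {s + 2..} \<and> R x \<inter> B = {}"
    "\<And>x y. x \<in> {1..s} \<Longrightarrow> y \<in> {1..s} \<Longrightarrow> x \<noteq> y \<Longrightarrow> R x \<inter> R y = {}"
    "\<And>i x. i \<in> {1..s + 1} \<Longrightarrow> x \<in> {1..s} \<Longrightarrow> insert x (R x) \<in> F i"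
    by (rule obtain_transversal_data[OF assms(1) \<open>40 \<le> s\<close> assms(3) F _ assms(8)]) (use assms(7) in auto)
  then have "\<not> cross_dependent s F"
    by (rule not_cross_dependent_if_transversal)
  then show False
    using assms(6) by contradiction
qed

end
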